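(* For all real $x,y>0$ with $x/y \geqslant 10^4$, \[ \frac{1}{\sqrt{x}} \sum_{k \leqslant x/y} \frac{\mu^2(k)}{\sqrt{k}} \leqslant \frac{12}{ \pi^2 \sqrt{y}}+\frac{0.17 \log (x/y)}{\sqrt{x}}. \]
   Context: $\mu$ is the Möbius function, so $\mu^2(k)$ is the indicator of squarefree positive integers $k$. The sum runs over positive integers $k\leqslant x/y$. *)

theory Defs
  imports "HOL-Analysis.Analysis" "HOL-Computational_Algebra.Squarefree"
begin

end

theory Submission
  imports Defs
begin

text \<open>
  Since \<open>\<mu>\<^sup>2(k) = \<Sum>\<^bsub>d\<^sup>2 | k\<^esub> \<mu>(d)\<close>, the sum equals
  \<open>\<Sum>\<^bsub>d \<le> \<surd>t\<^esub> \<mu>(d)/d \<cdot> F(t/d\<^sup>2)\<close> with \<open>t = x/y\<close> and \<open>F(u) = \<Sum>\<^bsub>m \<le> u\<^esub> 1/\<surd>m\<close>.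
  Elementary monotonicity arguments give \<open>F(u) = 2\<surd>u + \<zeta>(1/2) + h(u)\<close> with
  \<open>|h(u)| \<le> 0.68/\<surd>u\<close>, and \<open>\<Sum>\<^bsub>m \<le> y\<^esub> 1/m\<^sup>2 = \<pi>\<^sup>2/6 - 1/y + \<tau>(y)\<close> with \<open>|\<tau>(y)| \<le> 2/(3y\<^sup>2)\<close>.
  Inserting the latter into \<open>\<Sum>\<^bsub>d \<le> D\<^esub> \<mu>(d)/d\<^sup>2 \<cdot> \<Sum>\<^bsub>m \<le> D/d\<^esub> 1/m\<^sup>2 = 1\<close> determines
  \<open>\<Sum>\<^bsub>d \<le> D\<^esub> \<mu>(d)/d\<^sup>2\<close> up to \<open>6/\<pi>\<^sup>2 \<cdot> (1 + M/D)\<close>, where \<open>M = \<Sum>\<^bsub>d \<le> D\<^esub> \<mu>(d)/d\<close>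
  satisfies \<open>|M| \<le> 1\<close>. Hence the sum is \<open>12/\<pi>\<^sup>2 \<cdot> \<surd>t + (12/\<pi>\<^sup>2 + \<zeta>(1/2)) M\<close> plus
  errors bounded by a multiple of \<open>Q/\<surd>t\<close>, \<open>Q\<close> the number of squarefree \<open>d \<le> \<surd>t\<close>.
  As squarefree numbers avoid multiples of 4, \<open>Q \<le> (3\<surd>t + 3)/4\<close>, and everything beyond
  the main term is at most \<open>1.44 \<le> 0.17 log t\<close> once \<open>t \<ge> 10\<^sup>4\<close>.
\<close>

section \<open>The Moebius function and squarefree numbers\<close>

definition moebius_mu :: "nat \<Rightarrow> 'a :: comm_ring_1" where
  "moebius_mu n = (if squarefree n then (-1) ^ card (prime_factors n) else 0)"

lemma prime_factors_Prod_primes: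
  assumes "finite S" "\<And>p. p \<in> S \<Longrightarrow> prime (p :: nat)"
  shows "prime_factors (\<Prod>S) = S"
proof -
  have "prime_factors (prod id S) = \<Union>((prime_factors \<circ> id) ` S)"
    using assms by (intro prime_factors_prod) (auto dest: prime_gt_0_nat)
  then show ?thesis
    using assms(2) by (auto simp: prime_prime_factors)
qed

lemma squarefree_Prod_primes:
  assumes "finite S" "\<And>p. p \<in> S \<Longrightarrow> prime (p :: nat)"
  shows "squarefree (\<Prod>S)"
  using assms by (intro squarefree_prod_coprime) (auto intro: primes_coprime squarefree_prime)

lemma Prod_prime_factors_squarefree:
  assumes "squarefree (n :: nat)"
  shows "\<Prod>(prime_factors n) = n"
proof -
  have "n \<noteq> 0"
    using assms by (rule contrapos_pn) simp
  then have "(\<Prod>p\<in>prime_factors n. p ^ multiplicity p n) = n"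
    by (simp add: prod_prime_factors)
  moreover have "multiplicity p n = 1" if "p \<in> prime_factors n" for p
    using assms \<open>n \<noteq> 0\<close> that squarefree_factorial_semiring' by blast
  ultimately show ?thesis
    by simp
qed

lemma bij_betw_Prod_squarefree_divisors:
  assumes "n > (0 :: nat)"
  shows "bij_betw Prod (Pow (prime_factors n)) {d. d dvd n \<and> squarefree d}"
proof (rule bij_betw_imageI)
  have primes: "finite S" "\<And>p. p \<in> S \<Longrightarrow> prime p" if "S \<subseteq> prime_factors n" for S
    using that finite_subset by auto
  show "inj_on Prod (Pow (prime_factors n))"
    by (rule inj_onI) (metis PowD primes prime_factors_Prod_primes)
  show "Prod ` Pow (prime_factors n) = {d. d dvd n \<and> squarefree d}"
  proof (intro equalityI subsetI)
    fix d assume "d \<in> Prod ` Pow (prime_factors n)"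
    then obtain S where S: "S \<subseteq> prime_factors n" "d = \<Prod>S"
      by auto
    have "\<Prod>S dvd (\<Prod>p\<in>S. p ^ multiplicity p n)"
      using S(1) by (intro prod_dvd_prod) (auto simp: prime_factors_multiplicity)
    also have "\<dots> dvd (\<Prod>p\<in>prime_factors n. p ^ multiplicity p n)"
      using S(1) by (intro prod_dvd_prod_subset) auto
    also have "\<dots> = n"
      using assms by (simp add: prod_prime_factors)
    finally show "d \<in> {d. d dvd n \<and> squarefree d}"
      using S primes[OF S(1)] squarefree_Prod_primes by auto
  next
    fix d assume "d \<in> {d. d dvd n \<and> squarefree d}"
    then have "prime_factors d \<subseteq> prime_factors n" "\<Prod>(prime_factors d) = d"
      using assms by (auto simp: prime_factors_dvd Prod_prime_factors_squarefree intro: dvd_trans)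
    then show "d \<in> Prod ` Pow (prime_factors n)"
      by (metis PowI image_eqI)
  qed
qed

lemma sum_moebius_mu_divisors:
  assumes "n > 0"
  shows "(\<Sum>d | d dvd n. moebius_mu d) = (if n = 1 then 1 else (0 :: 'a :: comm_ring_1))"
proof -
  let ?P = "prime_factors n"
  have "(\<Sum>d | d dvd n. moebius_mu d) = (\<Sum>d | d dvd n \<and> squarefree d. (moebius_mu d :: 'a))"
    using assms by (intro sum.mono_neutral_right) (auto simp: moebius_mu_def)
  also have "\<dots> = (\<Sum>S\<in>Pow ?P. moebius_mu (\<Prod>S))"
    using bij_betw_Prod_squarefree_divisors[OF assms] by (rule sum.reindex_bij_betw[symmetric])
  also have "\<dots> = (\<Sum>S\<in>Pow ?P. (-1) ^ card S)"
  proof (intro sum.cong refl)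
    fix S assume "S \<in> Pow ?P"
    then have "finite S" "\<And>p. p \<in> S \<Longrightarrow> prime p"
      using finite_subset by auto
    then show "moebius_mu (\<Prod>S) = ((-1) ^ card S :: 'a)"
      by (simp add: moebius_mu_def squarefree_Prod_primes prime_factors_Prod_primes)
  qed
  also have "\<dots> = (\<Prod>p\<in>?P. 1 - 1)"
    using prod_diff_conv_sum[of ?P "\<lambda>_. 1 :: 'a" "\<lambda>_. 1"] by simp
  also have "\<dots> = (if n = 1 then 1 else 0)"
  proof -
    have "?P = {} \<longleftrightarrow> n = 1"
      using assms prime_factorization_empty_iff[of n] by auto
    then show ?thesis
      by (cases "?P = {}") (simp_all add: power_0_left)
  qed
  finally show ?thesis .
qed

lemma sum_moebius_mu_square_divisors:
  assumes "n > 0"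
  shows "(\<Sum>d | d\<^sup>2 dvd n. moebius_mu d) = (if squarefree n then 1 else (0 :: 'a :: comm_ring_1))"
proof -
  have "square_part n = 1 \<longleftrightarrow> squarefree n"
    by (metis dvd_square_part_iff nat_dvd_1_iff_1 square_part_square_dvd squarefreeD squarefreeI)
  have "(\<Sum>d | d\<^sup>2 dvd n. moebius_mu d) = (\<Sum>d | d dvd square_part n. moebius_mu d)"
    by (simp add: dvd_square_part_iff)
  also have "\<dots> = (if square_part n = 1 then 1 else (0 :: 'a))"
    using assms by (intro sum_moebius_mu_divisors) (metis square_part_0_iff gr0I)
  finally show ?thesis
    by (simp only: \<open>square_part n = 1 \<longleftrightarrow> squarefree n\<close>)
qed

lemma abs_moebius_mu_le_1: "\<bar>moebius_mu n :: 'a :: linordered_idom\<bar> \<le> 1"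
  by (simp add: moebius_mu_def power_abs)

lemma divisor_index_bounds:
  fixes w :: "nat \<Rightarrow> nat"
  assumes "w 0 = 0" "\<And>d. d \<le> w d" "w d dvd n" "n \<ge> 1"
  shows "0 < d" "d \<le> w d" "w d \<le> n"
proof -
  show "0 < d"
    using assms(1,3,4) by (cases "d = 0") auto
  show "d \<le> w d" "w d \<le> n"
    using assms(2-4) by (auto intro: dvd_imp_le)
qed

lemma bij_betw_divisor_pairs:
  fixes w :: "nat \<Rightarrow> nat"
  assumes "w 0 = 0" and le_w: "\<And>d. d \<le> w d"
  shows "bij_betw (\<lambda>(d, m). (w d * m, d))
           (SIGMA d:{1..N}. {1..N div w d}) (SIGMA n:{1..N}. {d. w d dvd n})"
proof (rule bij_betw_byWitness[where f' = "\<lambda>(n, d). (d, n div w d)"])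
  have pos: "w d > 0" if "d \<ge> 1" for d
    using le_w[of d] that by linarith
  show "\<forall>a\<in>SIGMA d:{1..N}. {1..N div w d}. (\<lambda>(n, d). (d, n div w d)) ((\<lambda>(d, m). (w d * m, d)) a) = a"
    using pos by auto
  show "\<forall>b\<in>SIGMA n:{1..N}. {d. w d dvd n}. (\<lambda>(d, m). (w d * m, d)) ((\<lambda>(n, d). (d, n div w d)) b) = b"
    by auto
  show "(\<lambda>(d, m). (w d * m, d)) ` (SIGMA d:{1..N}. {1..N div w d}) \<subseteq> (SIGMA n:{1..N}. {d. w d dvd n})"
  proof (rule image_subsetI)
    fix p assume "p \<in> (SIGMA d:{1..N}. {1..N div w d})"
    then obtain d m where "p = (d, m)" "d \<in> {1..N}" "m \<in> {1..N div w d}"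
      by (cases p) auto
    moreover have "w d * m \<le> N"
    proof -
      have "w d * m \<le> w d * (N div w d)"
        using \<open>m \<in> {1..N div w d}\<close> by simp
      also have "\<dots> \<le> N"
        by simp
      finally show ?thesis .
    qed
    ultimately show "(\<lambda>(d, m). (w d * m, d)) p \<in> (SIGMA n:{1..N}. {d. w d dvd n})"
      using pos[of d] by simp
  qed
  show "(\<lambda>(n, d). (d, n div w d)) ` (SIGMA n:{1..N}. {d. w d dvd n}) \<subseteq> (SIGMA d:{1..N}. {1..N div w d})"
  proof (rule image_subsetI)
    fix p assume "p \<in> (SIGMA n:{1..N}. {d. w d dvd n})"
    then obtain n d where "p = (n, d)" "1 \<le> n" "n \<le> N" "w d dvd n"
      by (cases p) auto
    moreover have bounds: "0 < d" "d \<le> w d" "w d \<le> n"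
      using divisor_index_bounds[OF assms \<open>w d dvd n\<close> \<open>1 \<le> n\<close>] by simp_all
    moreover have "0 < n div w d"
      using bounds by (simp add: div_greater_zero_iff)
    moreover have "n div w d \<le> N div w d"
      using \<open>n \<le> N\<close> by (rule div_le_mono)
    ultimately show "(\<lambda>(n, d). (d, n div w d)) p \<in> (SIGMA d:{1..N}. {1..N div w d})"
      by simp
  qed
qed

lemma sum_divisors_swap:
  fixes w :: "nat \<Rightarrow> nat" and G :: "nat \<Rightarrow> nat \<Rightarrow> 'a :: comm_monoid_add"
  assumes "w 0 = 0" and "\<And>d. d \<le> w d"
  shows "(\<Sum>n=1..N. \<Sum>d | w d dvd n. G d n) = (\<Sum>d=1..N. \<Sum>m=1..N div w d. G d (w d * m))"
proof -
  have "finite {d. w d dvd n}" if "n \<ge> 1" for n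
  proof (rule finite_subset)
    show "{d. w d dvd n} \<subseteq> {..n}"
      using divisor_index_bounds(2,3)[OF assms _ that] by fastforce
  qed simp
  then have "(\<Sum>n=1..N. \<Sum>d | w d dvd n. G d n)
      = (\<Sum>(n, d)\<in>(SIGMA n:{1..N}. {d. w d dvd n}). G d n)"
    by (intro sum.Sigma) auto
  also have "\<dots> = (\<Sum>(d, m)\<in>(SIGMA d:{1..N}. {1..N div w d}). G d (w d * m))"
    using sum.reindex_bij_betw[OF bij_betw_divisor_pairs[OF assms], of "\<lambda>(n, d). G d n" N]
    by (simp add: case_prod_unfold)
  also have "\<dots> = (\<Sum>d=1..N. \<Sum>m=1..N div w d. G d (w d * m))"
    by (rule sum.Sigma[symmetric]) auto
  finally show ?thesis .
qed

lemma sum_moebius_mu_partial_sums: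
  fixes g :: "nat \<Rightarrow> 'a :: comm_ring_1"
  assumes mult: "\<And>a b. g (a * b) = g a * g b" and "N \<ge> 1"
  shows "(\<Sum>d=1..N. moebius_mu d * g d * (\<Sum>m=1..N div d. g m)) = g 1"
proof -
  have "(\<Sum>d=1..N. moebius_mu d * g d * (\<Sum>m=1..N div d. g m))
      = (\<Sum>d=1..N. \<Sum>m=1..N div id d. moebius_mu d * g (id d * m))"
    by (simp add: mult sum_distrib_left mult.assoc)
  also have "\<dots> = (\<Sum>n=1..N. \<Sum>d | id d dvd n. moebius_mu d * g n)"
    by (rule sum_divisors_swap[symmetric]) auto
  also have "\<dots> = (\<Sum>n=1..N. if n = 1 then g n else 0)"
    by (intro sum.cong refl) (simp add: sum_distrib_right[symmetric] sum_moebius_mu_divisors)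
  also have "\<dots> = g 1"
    using \<open>N \<ge> 1\<close> by (subst sum.delta) auto
  finally show ?thesis .
qed

lemma sum_squarefree_eq_sum_moebius_mu:
  fixes g :: "nat \<Rightarrow> 'a :: comm_ring_1"
  assumes mult: "\<And>a b. g (a * b) = g a * g b"
  shows "(\<Sum>k=1..N. if squarefree k then g k else 0)
       = (\<Sum>d=1..N. moebius_mu d * g (d\<^sup>2) * (\<Sum>m=1..N div d\<^sup>2. g m))"
proof -
  have "(\<Sum>k=1..N. if squarefree k then g k else 0)
      = (\<Sum>k=1..N. \<Sum>d | d\<^sup>2 dvd k. moebius_mu d * g k)"
    by (intro sum.cong refl) (simp add: sum_distrib_right[symmetric] sum_moebius_mu_square_divisors)
  also have "\<dots> = (\<Sum>d=1..N. \<Sum>m=1..N div d\<^sup>2. moebius_mu d * g (d\<^sup>2 * m))"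
    by (rule sum_divisors_swap) (auto simp: power2_eq_square)
  also have "\<dots> = (\<Sum>d=1..N. moebius_mu d * g (d\<^sup>2) * (\<Sum>m=1..N div d\<^sup>2. g m))"
    by (simp add: mult sum_distrib_left mult.assoc)
  finally show ?thesis .
qed

lemma abs_sum_moebius_mu_le:
  fixes f :: "nat \<Rightarrow> real"
  assumes "\<And>d. d \<in> {1..K} \<Longrightarrow> \<bar>f d\<bar> \<le> B"
  shows "\<bar>\<Sum>d=1..K. moebius_mu d * f d\<bar> \<le> B * card {d \<in> {1..K}. squarefree d}"
proof -
  have "\<bar>\<Sum>d=1..K. moebius_mu d * f d\<bar> \<le> (\<Sum>d=1..K. \<bar>moebius_mu d * f d\<bar>)"
    by (rule sum_abs)
  also have "\<dots> \<le> (\<Sum>d=1..K. if squarefree d then B else 0)"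
  proof (rule sum_mono)
    fix d assume "d \<in> {1..K}"
    show "\<bar>moebius_mu d * f d\<bar> \<le> (if squarefree d then B else 0)"
    proof (cases "squarefree d")
      case True
      have "\<bar>moebius_mu d\<bar> * \<bar>f d\<bar> \<le> 1 * B"
        using assms \<open>d \<in> {1..K}\<close> abs_moebius_mu_le_1[of d] by (intro mult_mono) auto
      then show ?thesis
        using True by (simp add: abs_mult)
    next
      case False
      then show ?thesis
        by (simp add: moebius_mu_def)
    qed
  qed
  also have "\<dots> = B * card {d \<in> {1..K}. squarefree d}"
    by (simp add: sum.inter_filter[symmetric])
  finally show ?thesis .
qed

lemma card_squarefree_le: "real (card {d \<in> {1..K}. squarefree d}) \<le> (3 * real K + 3) / 4"
proof -
  let ?M = "(\<lambda>j. 4 * j) ` {1..K div 4}"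
  have "\<not> squarefree (4 * j)" for j :: nat
    using not_squarefreeI[of 2 "4 * j"] by simp
  then have "{d \<in> {1..K}. squarefree d} \<subseteq> {1..K} - ?M"
    by auto
  then have "card {d \<in> {1..K}. squarefree d} \<le> card ({1..K} - ?M)"
    by (intro card_mono) auto
  also have "\<dots> = K - K div 4"
  proof -
    have "4 * j \<le> K" if "j \<le> K div 4" for j
      using that by presburger
    then have "?M \<subseteq> {1..K}"
      by auto
    moreover have "card ?M = K div 4"
      by (subst card_image) (auto simp: inj_on_def)
    ultimately show ?thesis
      by (simp add: card_Diff_subset)
  qed
  finally have "real (card {d \<in> {1..K}. squarefree d}) \<le> real K - real (K div 4)"
    by (simp add: of_nat_diff flip: of_nat_le_iff)
  moreover have "real K \<le> 4 * real (K div 4) + 3"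
    using div_mult_mod_eq[of K 4] mod_less_divisor[of 4 K] by linarith
  ultimately show ?thesis
    by (simp add: field_simps)
qed

lemma abs_sum_moebius_mu_div_le_1:
  assumes "K \<ge> 1"
  shows "\<bar>\<Sum>d=1..K. moebius_mu d / real d\<bar> \<le> 1"
proof -
  let ?M = "\<Sum>d=1..K. moebius_mu d / real d"
  have "(\<Sum>d=1..K. moebius_mu d * real (K div d)) = 1"
    using sum_moebius_mu_partial_sums[of "\<lambda>_. 1 :: real" K] assms by simp
  then have "\<bar>real K * ?M - 1\<bar> = \<bar>\<Sum>d=1..K. moebius_mu d * (real K / real d - real (K div d))\<bar>"
    by (simp add: sum_distrib_left sum_subtractf algebra_simps)
  also have "\<dots> \<le> (\<Sum>d=1..K. if d = 1 then 0 else 1)"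
  proof (rule order_trans[OF sum_abs sum_mono])
    fix d assume "d \<in> {1..K}"
    have "real K = real d * real (K div d) + real (K mod d)"
      by (metis of_nat_add of_nat_mult div_mult_mod_eq mult.commute)
    then have "\<bar>moebius_mu d * (real K / real d - real (K div d))\<bar>
        = \<bar>moebius_mu d\<bar> * (real (K mod d) / real d)"
      using \<open>d \<in> {1..K}\<close> by (simp add: field_simps abs_mult)
    also have "\<dots> \<le> (if d = 1 then 0 else 1)"
    proof (cases "d = 1")
      case False
      have "\<bar>moebius_mu d\<bar> * (real (K mod d) / real d) \<le> 1 * 1"
        using \<open>d \<in> {1..K}\<close> abs_moebius_mu_le_1[of d] by (intro mult_mono) auto
      then show ?thesis
        using False by simp
    qed simp
    finally show "\<bar>moebius_mu d * (real K / real d - real (K div d))\<bar> \<le> (if d = 1 then 0 else 1)" .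
  qed
  also have "\<dots> = real K - 1"
    using assms by (simp add: sum.If_cases Diff_eq[symmetric] card_Diff_singleton of_nat_diff)
  finally have "\<bar>real K * ?M - 1\<bar> \<le> real K - 1" .
  then have "real K * ?M \<le> real K * 1" "real K * (- 1) \<le> real K * ?M"
    by (auto simp: abs_le_iff)
  then have "?M \<le> 1" "- 1 \<le> ?M"
    using assms by (simp_all only: mult_le_cancel_left_pos of_nat_0_less_iff)
  then show ?thesis
    by (simp add: abs_le_iff)
qed

section \<open>Partial sums of \<open>1/\<surd>m\<close> and \<open>1/m\<^sup>2\<close>\<close>

definition inv_sqrt_sum :: "nat \<Rightarrow> real" where
  "inv_sqrt_sum n = (\<Sum>m=1..n. 1 / sqrt (real m))"

definition inv_square_sum :: "nat \<Rightarrow> real" where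
  "inv_square_sum n = (\<Sum>m=1..n. 1 / (real m)\<^sup>2)"

lemma limit_between_monotone_bounds:
  fixes l u :: "nat \<Rightarrow> real"
  assumes "incseq l" "decseq u" "\<And>n. l n \<le> u n" "l \<longlonglongrightarrow> L"
  shows "l n \<le> L" "L \<le> u n"
proof -
  show "l n \<le> L"
    using assms(1,4) by (rule incseq_le)
  have "\<forall>m\<ge>n. l m \<le> u n"
    using assms(2,3) by (metis decseqD order_trans)
  then show "L \<le> u n"
    using LIMSEQ_le_const2[OF assms(4)] by blast
qed

lemma two_sqrt_diff_le:
  fixes x :: real
  assumes "x > 0"
  shows "2 * (sqrt (x + 1) - sqrt x) \<le> 1 / (2 * sqrt x) + 1 / (2 * sqrt (x + 1))"
proof -
  define r q where "r = sqrt x" and "q = sqrt (x + 1)"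
  have pos: "r > 0" "q > 0" and "q\<^sup>2 = r\<^sup>2 + 1"
    using assms by (auto simp: r_def q_def)
  then have "q - r = 1 / (q + r)"
    by (simp add: field_simps power2_eq_square)
  also have "\<dots> \<le> (q + r) / (4 * q * r)"
    using pos sum_squares_ge_zero[of "q - r" 0] by (simp add: field_simps power2_eq_square)
  finally show ?thesis
    using pos unfolding r_def[symmetric] q_def[symmetric] by (simp add: field_simps)
qed

lemma two_sqrt_diff_ge:
  fixes x :: real
  assumes "x \<ge> 0"
  shows "3 / (2 * sqrt (x + 1)) - 1 / (2 * sqrt (x + 2)) \<le> 2 * (sqrt (x + 1) - sqrt x)"
proof -
  define r q w where "r = sqrt x" and "q = sqrt (x + 1)" and "w = sqrt (x + 2)"
  have pos: "r \<ge> 0" "q > 0" "w > 0" and "q\<^sup>2 = r\<^sup>2 + 1" "w\<^sup>2 = q\<^sup>2 + 1"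
    using assms by (auto simp: r_def q_def w_def)
  have "r < q" "q < w"
    unfolding r_def q_def w_def by auto
  have qr: "q - r = 1 / (q + r)" and wq: "w - q = 1 / (w + q)"
    using pos \<open>q\<^sup>2 = r\<^sup>2 + 1\<close> \<open>w\<^sup>2 = q\<^sup>2 + 1\<close> by (simp_all add: field_simps power2_eq_square)
  have "2 * (q - r) - 1 / q = 2 / (q + r) - 1 / q"
    using qr by simp
  also have "\<dots> = (q - r) / (q * (q + r))"
    using pos \<open>r < q\<close> by (simp add: field_simps)
  also have "\<dots> = 1 / (q * (q + r)\<^sup>2)"
    unfolding qr by (simp add: power2_eq_square)
  finally have "2 * (q - r) - 1 / q = 1 / (q * (q + r)\<^sup>2)" .
  moreover have "1 / (2 * q) - 1 / (2 * w) = (w - q) / (2 * q * w)"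
    using pos by (simp add: field_simps)
  then have "1 / (2 * q) - 1 / (2 * w) = 1 / (2 * q * w * (w + q))"
    unfolding wq by simp
  moreover have "q * (q + r)\<^sup>2 \<le> 2 * q * w * (w + q)"
  proof -
    have "(q + r)\<^sup>2 \<le> (2 * q)\<^sup>2"
      using \<open>r < q\<close> pos by (intro power_mono) auto
    also have "\<dots> = 2 * (q * (q + q))"
      by (simp add: power2_eq_square)
    also have "\<dots> \<le> 2 * (w * (w + q))"
      using \<open>q < w\<close> pos by (intro mult_left_mono mult_mono) auto
    finally show ?thesis
      using pos by (simp add: mult.assoc mult_left_mono)
  qed
  then have "1 / (2 * q * w * (w + q)) \<le> 1 / (q * (q + r)\<^sup>2)"
    using pos \<open>r < q\<close> by (intro divide_left_mono) auto
  moreover have "3 / (2 * q) = 1 / q + 1 / (2 * q)"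
    by simp
  ultimately have "3 / (2 * q) - 1 / (2 * w) \<le> 2 * (q - r)"
    by linarith
  then show ?thesis
    unfolding r_def q_def w_def .
qed

text \<open>The constant \<open>\<zeta>(1/2) = -1.4603\<dots>\<close>.\<close>

definition zeta_half :: real where
  "zeta_half = lim (\<lambda>n. inv_sqrt_sum (Suc n) - 2 * sqrt (Suc n) - 1 / (2 * sqrt (Suc n)))"

lemma inv_sqrt_sum_Suc: "inv_sqrt_sum (Suc n) = inv_sqrt_sum n + 1 / sqrt (Suc n)"
  by (simp add: inv_sqrt_sum_def)

lemma zeta_half_bounds:
  assumes "n \<ge> 1"
  shows "inv_sqrt_sum n - 2 * sqrt n - 1 / (2 * sqrt n) \<le> zeta_half"
    and "zeta_half \<le> inv_sqrt_sum n - 2 * sqrt n - 1 / (2 * sqrt (n + 1))"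
proof -
  define l where "l k = inv_sqrt_sum (Suc k) - 2 * sqrt (Suc k) - 1 / (2 * sqrt (Suc k))" for k
  define u where "u k = inv_sqrt_sum (Suc k) - 2 * sqrt (Suc k) - 1 / (2 * sqrt (Suc k + 1))" for k
  have "incseq l"
  proof (rule incseq_SucI)
    fix k
    show "l k \<le> l (Suc k)"
      using two_sqrt_diff_le[of "Suc k"]
      by (simp add: l_def inv_sqrt_sum_Suc[of "Suc k"] add_ac)
  qed
  moreover have "decseq u"
  proof (rule decseq_SucI)
    fix k
    show "u (Suc k) \<le> u k"
      using two_sqrt_diff_ge[of "Suc k"]
      by (simp add: u_def inv_sqrt_sum_Suc[of "Suc k"] add_ac)
  qed
  moreover have "l k \<le> u k" for k
    by (simp add: l_def u_def frac_le)
  moreover have "l \<longlonglongrightarrow> zeta_half"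
  proof -
    have "l k \<le> u 0" for k
      using \<open>decseq u\<close> \<open>l k \<le> u k\<close> by (metis decseqD le0 order_trans)
    then obtain L where "l \<longlonglongrightarrow> L"
      using incseq_convergent[OF \<open>incseq l\<close>] by blast
    then show ?thesis
      unfolding zeta_half_def l_def[symmetric] by (simp add: limI)
  qed
  moreover obtain k where "n = Suc k"
    using assms by (cases n) auto
  ultimately show "inv_sqrt_sum n - 2 * sqrt n - 1 / (2 * sqrt n) \<le> zeta_half"
    and "zeta_half \<le> inv_sqrt_sum n - 2 * sqrt n - 1 / (2 * sqrt (n + 1))"
    using limit_between_monotone_bounds[of l u zeta_half k] by (simp_all add: l_def u_def add_ac)
qed

lemma inverse_square_step_bounds:
  fixes m :: real
  assumes "m \<ge> 1"
  shows "1 / m - 1 / (2 * m\<^sup>2) - (1 / (m + 1) - 1 / (2 * (m + 1)\<^sup>2)) \<le> 1 / (m + 1)\<^sup>2"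
    and "1 / (m + 1)\<^sup>2 \<le> 1 / (m + 1/2) - 1 / (m + 3/2)"
    and "1 / m - 1 / (2 * m\<^sup>2) \<le> 1 / (m + 1/2)"
proof -
  have "m > 0" "2 * m\<^sup>2 * (2 * m + 1) > 0"
    using assms by simp_all
  then have "1 / m - 1 / (2 * m\<^sup>2) - (1 / (m + 1) - 1 / (2 * (m + 1)\<^sup>2)) - 1 / (m + 1)\<^sup>2
      = - 1 / (2 * m\<^sup>2 * (m + 1)\<^sup>2)"
    and "1 / m - 1 / (2 * m\<^sup>2) = 1 / (m + 1/2) - 1 / (2 * m\<^sup>2 * (2 * m + 1))"
    by (simp_all add: divide_simps) algebra+
  moreover have "- 1 / (2 * m\<^sup>2 * (m + 1)\<^sup>2) \<le> 0" "0 \<le> 1 / (2 * m\<^sup>2 * (2 * m + 1))"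
    using \<open>m > 0\<close> by (simp_all add: divide_nonpos_nonneg)
  ultimately show "1 / m - 1 / (2 * m\<^sup>2) - (1 / (m + 1) - 1 / (2 * (m + 1)\<^sup>2)) \<le> 1 / (m + 1)\<^sup>2"
    and "1 / m - 1 / (2 * m\<^sup>2) \<le> 1 / (m + 1/2)"
    by linarith+
  have "(m + 1) * (m + 1) \<ge> 2 * 2"
    using assms by (intro mult_mono) auto
  then have "1 / (m + 1)\<^sup>2 \<le> 1 / ((m + 1)\<^sup>2 - 1/4)"
    by (intro divide_left_mono mult_pos_pos) (auto simp: power2_eq_square)
  also have "\<dots> = 1 / (m + 1/2) - 1 / (m + 3/2)"
    using assms by (simp add: field_simps power2_eq_square)
  finally show "1 / (m + 1)\<^sup>2 \<le> 1 / (m + 1/2) - 1 / (m + 3/2)" .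
qed

lemma inv_square_sum_tendsto: "inv_square_sum \<longlonglongrightarrow> pi\<^sup>2 / 6"
proof -
  have "inv_square_sum = (\<lambda>k. \<Sum>i<k. 1 / (real i + 1)\<^sup>2)"
  proof
    fix k
    show "inv_square_sum k = (\<Sum>i<k. 1 / (real i + 1)\<^sup>2)"
      unfolding inv_square_sum_def by (induction k) (auto simp: add.commute)
  qed
  then show ?thesis
    using inverse_squares_sums by (simp add: sums_def add.commute)
qed

lemma basel_bounds:
  assumes "n \<ge> 1"
  shows "inv_square_sum n + 1 / n - 1 / (2 * (real n)\<^sup>2) \<le> pi\<^sup>2 / 6"
    and "pi\<^sup>2 / 6 \<le> inv_square_sum n + 1 / (n + 1 / 2)"
proof -
  define l where "l k = inv_square_sum (Suc k) + 1 / Suc k - 1 / (2 * (real (Suc k))\<^sup>2)" for k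
  define u where "u k = inv_square_sum (Suc k) + 1 / (Suc k + 1 / 2)" for k
  have "incseq l"
  proof (rule incseq_SucI)
    fix k
    show "l k \<le> l (Suc k)"
      using inverse_square_step_bounds(1)[of "Suc k"] by (simp add: l_def inv_square_sum_def algebra_simps)
  qed
  moreover have "decseq u"
  proof (rule decseq_SucI)
    fix k
    show "u (Suc k) \<le> u k"
      using inverse_square_step_bounds(2)[of "Suc k"] by (simp add: u_def inv_square_sum_def algebra_simps)
  qed
  moreover have "l k \<le> u k" for k
    using inverse_square_step_bounds(3)[of "Suc k"] by (simp add: l_def u_def)
  moreover have "l \<longlonglongrightarrow> pi\<^sup>2 / 6"
  proof -
    have "(\<lambda>k. inv_square_sum (Suc k) + inverse (real (Suc k)) - (inverse (real (Suc k)))\<^sup>2 / 2)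
        \<longlonglongrightarrow> pi\<^sup>2 / 6 + 0 - 0\<^sup>2 / 2"
      using LIMSEQ_Suc[OF inv_square_sum_tendsto] LIMSEQ_inverse_real_of_nat
      by (intro tendsto_add tendsto_diff tendsto_divide tendsto_power tendsto_const) auto
    then show ?thesis
      unfolding l_def by (simp add: inverse_eq_divide power_divide mult.commute)
  qed
  moreover obtain k where "n = Suc k"
    using assms by (cases n) auto
  ultimately show "inv_square_sum n + 1 / n - 1 / (2 * (real n)\<^sup>2) \<le> pi\<^sup>2 / 6"
    and "pi\<^sup>2 / 6 \<le> inv_square_sum n + 1 / (n + 1 / 2)"
    using limit_between_monotone_bounds[of l u "pi\<^sup>2 / 6" k] by (simp_all add: l_def u_def)
qed

lemma sqrt_step_upper_bound:
  fixes r v :: real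
  assumes "1 \<le> r" "r \<le> v"
  shows "(1 / (2 * r) - 2 * (v - r)) * v \<le> 1/2"
proof -
  have "1 / (2 * r) \<le> 1 / 2"
    using assms by simp
  then have "1 / (2 * r) \<le> 2 * v"
    using assms by linarith
  then have "0 \<le> (v - r) * (2 * v - 1 / (2 * r))"
    using assms by simp
  moreover have "(1 / (2 * r) - 2 * (v - r)) * v = 1/2 - (v - r) * (2 * v - 1 / (2 * r))"
    using assms by (simp add: field_simps)
  ultimately show ?thesis
    by linarith
qed

lemma sqrt_step_endpoint_bound:
  fixes r :: real
  assumes "r \<ge> 1"
  shows "sqrt (r\<^sup>2 + 1) * (sqrt (r\<^sup>2 + 1) - r) \<le> 59/100"
proof -
  define q where "q = sqrt (r\<^sup>2 + 1)"
  \<comment> \<open>\<open>q (q - r) = q / (q + r)\<close> is largest at \<open>r = 1\<close>, where it equals \<open>2 - \<surd>2 < 0.59\<close>.\<close>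
  have "q > r"
    unfolding q_def using assms real_less_rsqrt by simp
  have "1 \<le> r\<^sup>2"
    using assms by simp
  moreover have "(41 * q)\<^sup>2 = 1681 * (r\<^sup>2 + 1)" "(59 * r)\<^sup>2 = 3481 * r\<^sup>2"
    by (simp_all add: q_def power_mult_distrib)
  ultimately have "(41 * q)\<^sup>2 \<le> (59 * r)\<^sup>2"
    by simp
  then have "41 * q \<le> 59 * r"
    by (rule power2_le_imp_le) (use assms in simp)
  have "q * (q - r) * (q + r) = q"
    using assms by (simp add: q_def algebra_simps power2_eq_square[symmetric])
  then have "q * (q - r) = q / (q + r)"
    using assms \<open>q > r\<close> by (simp add: eq_divide_eq)
  also have "\<dots> \<le> 59/100"
    using \<open>41 * q \<le> 59 * r\<close> assms \<open>q > r\<close> by (simp add: pos_divide_le_eq)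
  finally show ?thesis
    unfolding q_def .
qed

lemma sqrt_step_lower_bound:
  fixes r v :: real
  assumes "r \<ge> 1" "r \<le> v" "v \<le> sqrt (r\<^sup>2 + 1)"
  shows "- (17/25) \<le> v / (2 * sqrt (r\<^sup>2 + 1)) - 2 * v * (v - r)"
proof -
  define q where "q = sqrt (r\<^sup>2 + 1)"
  define \<phi> where "\<phi> x = x / (2 * q) - 2 * x * (x - r)" for x
  have "q > r" "v \<le> q"
    unfolding q_def using assms real_less_rsqrt by simp_all
  have "0 \<le> \<phi> r"
    using assms(1) \<open>q > r\<close> by (simp add: \<phi>_def)
  have "- (17/25) \<le> \<phi> q"
    using sqrt_step_endpoint_bound[OF assms(1)] \<open>q > r\<close> by (simp add: \<phi>_def q_def algebra_simps)
  \<comment> \<open>\<open>\<phi>\<close> is a concave quadratic, hence above the chord through its values at \<open>r\<close> and \<open>q\<close>.\<close>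
  have "(q - r) * (- (17/25)) \<le> (v - r) * (- (17/25))"
    using \<open>v \<le> q\<close> by simp
  also have "\<dots> \<le> (v - r) * \<phi> q"
    using \<open>- (17/25) \<le> \<phi> q\<close> assms(2) by (intro mult_left_mono) simp_all
  also have "\<dots> \<le> (q - v) * \<phi> r + (v - r) * \<phi> q + 2 * (v - r) * (q - v) * (q - r)"
    using \<open>0 \<le> \<phi> r\<close> \<open>v \<le> q\<close> \<open>q > r\<close> assms(2) by simp
  also have "\<dots> = (q - r) * \<phi> v"
    using \<open>q > r\<close> assms(1) by (simp add: \<phi>_def field_simps)
  finally have "(q - r) * (- (17/25)) \<le> (q - r) * \<phi> v" .
  then have "- (17/25) \<le> \<phi> v"
    by (rule mult_left_le_imp_le) (use \<open>q > r\<close> in simp)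
  then show ?thesis
    by (simp add: \<phi>_def q_def)
qed

lemma zeta_half_remainder_bound:
  assumes "u \<ge> 1"
  shows "\<bar>inv_sqrt_sum (nat \<lfloor>u\<rfloor>) - 2 * sqrt u - zeta_half\<bar> \<le> (17/25) / sqrt u"
proof -
  define n where "n = nat \<lfloor>u\<rfloor>"
  define r v where "r = sqrt n" and "v = sqrt u"
  define A where "A = inv_sqrt_sum n - 2 * r - zeta_half"
  have "n \<ge> 1" "real n \<le> u" "u < n + 1"
    using assms unfolding n_def by (simp_all add: le_nat_floor) linarith+
  then have r: "1 \<le> r" "r \<le> v" "v \<le> sqrt (r\<^sup>2 + 1)"
    by (simp_all add: r_def v_def)
  have A: "1 / (2 * sqrt (r\<^sup>2 + 1)) \<le> A" "A \<le> 1 / (2 * r)"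
    using zeta_half_bounds[OF \<open>n \<ge> 1\<close>] by (simp_all add: A_def r_def add_ac)
  have "(A - 2 * (v - r)) * v \<le> (1 / (2 * r) - 2 * (v - r)) * v"
    using A r by (intro mult_right_mono) auto
  also have "\<dots> \<le> 1/2"
    using r by (intro sqrt_step_upper_bound)
  finally have upper: "(A - 2 * (v - r)) * v \<le> 1/2" .
  have "- (17/25) \<le> v / (2 * sqrt (r\<^sup>2 + 1)) - 2 * v * (v - r)"
    using r by (rule sqrt_step_lower_bound)
  also have "\<dots> \<le> (A - 2 * (v - r)) * v"
    using mult_right_mono[OF A(1), of v] r by (simp add: algebra_simps)
  finally have "\<bar>A - 2 * (v - r)\<bar> * v \<le> 17/25"
    using upper r by (simp add: abs_le_iff abs_mult_pos)
  then have "\<bar>A - 2 * (v - r)\<bar> \<le> (17/25) / v"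
    using r by (simp add: le_divide_eq)
  moreover have "inv_sqrt_sum n - 2 * v - zeta_half = A - 2 * (v - r)"
    by (simp add: A_def)
  ultimately show ?thesis
    unfolding n_def[symmetric] v_def[symmetric] by (simp only:)
qed

lemma basel_bracket_scaled_bounds:
  fixes m y :: real
  assumes "1 \<le> m" "m \<le> y" "y < m + 1"
  shows "(1 / (m + 1/2) - 1 / y) * y\<^sup>2 \<le> 2/3"
    and "- (1/2) \<le> (1 / m - 1 / (2 * m\<^sup>2) - 1 / y) * y\<^sup>2"
proof -
  have "(1 / a - 1 / y) * y\<^sup>2 = y * (y - a) / a" if "a > 0" for a
    using that assms by (simp add: field_simps power2_eq_square)
  then have "(1 / (m + 1/2) - 1 / y) * y\<^sup>2 = y * (y - (m + 1/2)) / (m + 1/2)"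
    using assms by simp
  also have "\<dots> \<le> 2/3"
  proof (cases "y \<ge> m + 1/2")
    case True
    have "y * (y - (m + 1/2)) \<le> (m + 1) * (1/2)"
      using True assms by (intro mult_mono) auto
    also have "\<dots> \<le> 2/3 * (m + 1/2)"
      using assms by simp
    finally show ?thesis
      using assms by (simp add: divide_simps)
  next
    case False
    then have "y * (y - (m + 1/2)) \<le> 0"
      using assms by (intro mult_nonneg_nonpos) auto
    then have "y * (y - (m + 1/2)) / (m + 1/2) \<le> 0"
      using assms by (intro divide_nonpos_pos) auto
    then show ?thesis
      by linarith
  qed
  finally show "(1 / (m + 1/2) - 1 / y) * y\<^sup>2 \<le> 2/3" .
  define e where "e = y - m"
  have "- (1/2) \<le> e * (2 * m * (m - 1) + e * (2 * m - 1)) / (2 * m\<^sup>2) - 1/2"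
    using assms by (simp add: e_def)
  also have "\<dots> = (1 / m - 1 / (2 * m\<^sup>2) - 1 / y) * y\<^sup>2"
    using assms by (simp add: e_def field_simps power2_eq_square)
  finally show "- (1/2) \<le> (1 / m - 1 / (2 * m\<^sup>2) - 1 / y) * y\<^sup>2" .
qed

lemma basel_remainder_bound:
  assumes "y \<ge> 1"
  shows "\<bar>pi\<^sup>2 / 6 - 1 / y - inv_square_sum (nat \<lfloor>y\<rfloor>)\<bar> \<le> (2/3) / y\<^sup>2"
proof -
  define n where "n = nat \<lfloor>y\<rfloor>"
  have "n \<ge> 1" "real n \<le> y" "y < n + 1"
    using assms unfolding n_def by (simp_all add: le_nat_floor) linarith+
  have "(pi\<^sup>2 / 6 - 1 / y - inv_square_sum n) * y\<^sup>2 \<le> (1 / (n + 1/2) - 1 / y) * y\<^sup>2"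
    using basel_bounds(2)[OF \<open>n \<ge> 1\<close>] by (intro mult_right_mono) auto
  also have "\<dots> \<le> 2/3"
    using \<open>n \<ge> 1\<close> \<open>real n \<le> y\<close> \<open>y < n + 1\<close> by (intro basel_bracket_scaled_bounds) auto
  finally have "(pi\<^sup>2 / 6 - 1 / y - inv_square_sum n) * y\<^sup>2 \<le> 2/3" .
  moreover have "- (1/2) \<le> (1 / n - 1 / (2 * (real n)\<^sup>2) - 1 / y) * y\<^sup>2"
    using \<open>n \<ge> 1\<close> \<open>real n \<le> y\<close> \<open>y < n + 1\<close> by (intro basel_bracket_scaled_bounds) auto
  moreover have "\<dots> \<le> (pi\<^sup>2 / 6 - 1 / y - inv_square_sum n) * y\<^sup>2"
    using basel_bounds(1)[OF \<open>n \<ge> 1\<close>] by (intro mult_right_mono) auto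
  ultimately have "\<bar>(pi\<^sup>2 / 6 - 1 / y - inv_square_sum n) * y\<^sup>2\<bar> \<le> 2/3"
    unfolding abs_le_iff by (intro conjI; linarith)
  then show ?thesis
    using assms by (simp add: n_def abs_mult le_divide_eq)
qed

lemma twelve_div_pi_squared_bounds: "1.2 \<le> 12 / pi\<^sup>2" "12 / pi\<^sup>2 \<le> 1.22"
proof -
  have pi: "3.14 \<le> pi" "pi \<le> 3.15"
    using pi_approx by auto
  have "3.14 * 3.14 \<le> pi * pi" "pi * pi \<le> 3.15 * 3.15"
    by (rule mult_mono; use pi in simp)+
  then show "1.2 \<le> 12 / pi\<^sup>2" "12 / pi\<^sup>2 \<le> 1.22"
    by (simp_all add: field_simps power2_eq_square)
qed

lemma zeta_half_numeric_bounds: "- 3/2 \<le> zeta_half" "zeta_half \<le> - 1.35"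
proof -
  have "sqrt 2 \<le> 1.42"
    by (rule real_le_lsqrt) (auto simp: power2_eq_square)
  then have "1 / (2 * 1.42) \<le> 1 / (2 * sqrt 2)"
    by (intro divide_left_mono) auto
  then show "- 3/2 \<le> zeta_half" "zeta_half \<le> - 1.35"
    using zeta_half_bounds[of 1] by (simp_all add: inv_sqrt_sum_def)
qed

section \<open>The sum over squarefree numbers\<close>

lemma nat_floor_divide_of_nat:
  assumes "t \<ge> 0"
  shows "nat \<lfloor>t / real d\<rfloor> = nat \<lfloor>t\<rfloor> div d"
proof -
  have "\<lfloor>t / real_of_int (int d)\<rfloor> = \<lfloor>t\<rfloor> div int d"
    by (rule floor_divide_real_eq_div) simp
  then show ?thesis
    using assms by (simp add: nat_div_distrib)
qed

lemma nat_floor_sqrt_le_nat_floor: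
  assumes "t \<ge> 0"
  shows "nat \<lfloor>sqrt t\<rfloor> \<le> nat \<lfloor>t\<rfloor>"
proof (cases "t < 1")
  case False
  then have "sqrt t * 1 \<le> sqrt t * sqrt t"
    by (intro mult_left_mono) auto
  then show ?thesis
    using assms by (intro nat_mono floor_mono) simp
qed simp

lemma nat_floor_divide_square_eq_0:
  assumes "t \<ge> 0" "sqrt t < real d"
  shows "nat \<lfloor>t / (real d)\<^sup>2\<rfloor> = 0"
proof -
  have "sqrt t < sqrt ((real d)\<^sup>2)"
    using assms(2) by simp
  then have "t < (real d)\<^sup>2"
    by (simp only: real_sqrt_less_iff)
  moreover have "0 < real d"
    using assms real_sqrt_ge_zero[of t] by linarith
  ultimately have "t / (real d)\<^sup>2 < 1"
    by (simp add: divide_less_eq)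
  then show ?thesis
    by simp
qed

lemma sum_squarefree_inv_sqrt_eq:
  fixes t :: real
  assumes "t \<ge> 0"
  shows "(\<Sum>k=1..nat \<lfloor>t\<rfloor>. (if squarefree k then 1 else 0) / sqrt (real k))
       = (\<Sum>d=1..nat \<lfloor>sqrt t\<rfloor>. moebius_mu d / real d * inv_sqrt_sum (nat \<lfloor>t / (real d)\<^sup>2\<rfloor>))"
proof -
  define N where "N = nat \<lfloor>t\<rfloor>"
  have "(\<Sum>k=1..N. (if squarefree k then 1 else 0) / sqrt (real k))
      = (\<Sum>k=1..N. if squarefree k then 1 / sqrt (real k) else 0)"
    by (intro sum.cong) auto
  also have "\<dots> = (\<Sum>d=1..N. moebius_mu d * (1 / sqrt (real (d\<^sup>2))) * inv_sqrt_sum (N div d\<^sup>2))"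
    unfolding inv_sqrt_sum_def by (rule sum_squarefree_eq_sum_moebius_mu) (simp add: real_sqrt_mult)
  also have "\<dots> = (\<Sum>d=1..N. moebius_mu d / real d * inv_sqrt_sum (nat \<lfloor>t / (real d)\<^sup>2\<rfloor>))"
  proof (intro sum.cong refl)
    fix d
    have "nat \<lfloor>t / (real d)\<^sup>2\<rfloor> = N div d\<^sup>2"
      using nat_floor_divide_of_nat[OF assms, of "d\<^sup>2"] by (simp add: N_def)
    then show "moebius_mu d * (1 / sqrt (real (d\<^sup>2))) * inv_sqrt_sum (N div d\<^sup>2)
        = moebius_mu d / real d * inv_sqrt_sum (nat \<lfloor>t / (real d)\<^sup>2\<rfloor>)"
      by simp
  qed
  also have "\<dots> = (\<Sum>d=1..nat \<lfloor>sqrt t\<rfloor>. moebius_mu d / real d * inv_sqrt_sum (nat \<lfloor>t / (real d)\<^sup>2\<rfloor>))"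
  proof (rule sum.mono_neutral_right)
    show "{1..nat \<lfloor>sqrt t\<rfloor>} \<subseteq> {1..N}"
      using nat_floor_sqrt_le_nat_floor[OF assms] by (auto simp: N_def)
    have "nat \<lfloor>t / (real d)\<^sup>2\<rfloor> = 0" if "d \<in> {1..N} - {1..nat \<lfloor>sqrt t\<rfloor>}" for d
    proof (rule nat_floor_divide_square_eq_0[OF assms])
      show "sqrt t < real d"
        using that by simp linarith
    qed
    then show "\<forall>d\<in>{1..N} - {1..nat \<lfloor>sqrt t\<rfloor>}.
        moebius_mu d / real d * inv_sqrt_sum (nat \<lfloor>t / (real d)\<^sup>2\<rfloor>) = 0"
      by (simp add: inv_sqrt_sum_def)
  qed simp
  finally show ?thesis
    by (simp add: N_def)
qed

lemma sum_moebius_mu_inv_square_sum_floor: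
  assumes "D \<ge> 1"
  shows "(\<Sum>d=1..nat \<lfloor>D\<rfloor>. moebius_mu d / (real d)\<^sup>2 * inv_square_sum (nat \<lfloor>D / real d\<rfloor>)) = 1"
proof -
  have "(\<Sum>d=1..nat \<lfloor>D\<rfloor>. moebius_mu d * (1 / (real d)\<^sup>2) * inv_square_sum (nat \<lfloor>D\<rfloor> div d))
      = 1 / (real 1)\<^sup>2"
    unfolding inv_square_sum_def using assms
    by (intro sum_moebius_mu_partial_sums) (simp_all add: power_mult_distrib le_nat_floor)
  then show ?thesis
    using assms by (simp add: nat_floor_divide_of_nat)
qed

lemma sum_squarefree_inv_sqrt_approx:
  fixes t :: real
  assumes "t \<ge> 1"
  defines "K \<equiv> nat \<lfloor>sqrt t\<rfloor>"
  shows "\<bar>(\<Sum>k=1..nat \<lfloor>t\<rfloor>. (if squarefree k then 1 else 0) / sqrt (real k))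
            - (2 * sqrt t * (\<Sum>d=1..K. moebius_mu d / (real d)\<^sup>2)
               + zeta_half * (\<Sum>d=1..K. moebius_mu d / real d))\<bar>
         \<le> (17/25) / sqrt t * card {d \<in> {1..K}. squarefree d}"
proof -
  define h where "h d = inv_sqrt_sum (nat \<lfloor>t / (real d)\<^sup>2\<rfloor>) - 2 * (sqrt t / real d) - zeta_half" for d
  have "(\<Sum>k=1..nat \<lfloor>t\<rfloor>. (if squarefree k then 1 else 0) / sqrt (real k))
            - (2 * sqrt t * (\<Sum>d=1..K. moebius_mu d / (real d)\<^sup>2)
               + zeta_half * (\<Sum>d=1..K. moebius_mu d / real d))
      = (\<Sum>d=1..K. moebius_mu d * (h d / real d))"
  proof -
    have "(\<Sum>k=1..nat \<lfloor>t\<rfloor>. (if squarefree k then 1 else 0) / sqrt (real k))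
        = (\<Sum>d=1..K. moebius_mu d / real d * inv_sqrt_sum (nat \<lfloor>t / (real d)\<^sup>2\<rfloor>))"
      unfolding K_def by (rule sum_squarefree_inv_sqrt_eq) (use assms in simp)
    also have "\<dots> = (\<Sum>d=1..K. 2 * sqrt t * (moebius_mu d / (real d)\<^sup>2)
                             + zeta_half * (moebius_mu d / real d) + moebius_mu d * (h d / real d))"
      by (intro sum.cong refl) (simp add: h_def field_simps power2_eq_square)
    finally show ?thesis
      by (simp add: sum.distrib sum_distrib_left)
  qed
  also have "\<bar>\<dots>\<bar> \<le> (17/25) / sqrt t * card {d \<in> {1..K}. squarefree d}"
  proof (rule abs_sum_moebius_mu_le)
    fix d assume d: "d \<in> {1..K}"
    then have "d \<le> nat \<lfloor>sqrt t\<rfloor>"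
      by (simp add: K_def)
    then have "real d \<le> sqrt t"
      using real_sqrt_ge_zero[of t] assms(1) by linarith
    then have "(real d)\<^sup>2 \<le> t"
      using power_mono[of "real d" "sqrt t" 2] assms(1) by simp
    then have "1 \<le> t / (real d)\<^sup>2" "sqrt (t / (real d)\<^sup>2) = sqrt t / real d"
      using d by (simp_all add: real_sqrt_divide)
    then have "\<bar>h d\<bar> \<le> (17/25) / (sqrt t / real d)"
      using zeta_half_remainder_bound[of "t / (real d)\<^sup>2"] by (simp add: h_def)
    then show "\<bar>h d / real d\<bar> \<le> (17/25) / sqrt t"
      using d by (simp add: field_simps)
  qed
  finally show ?thesis .
qed

lemma sum_moebius_mu_div_square_approx:
  fixes D :: real
  assumes "D \<ge> 1"
  defines "K \<equiv> nat \<lfloor>D\<rfloor>"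
  shows "\<bar>pi\<^sup>2 / 6 * (\<Sum>d=1..K. moebius_mu d / (real d)\<^sup>2) - 1
            - (\<Sum>d=1..K. moebius_mu d / real d) / D\<bar>
         \<le> (2/3) / D\<^sup>2 * card {d \<in> {1..K}. squarefree d}"
proof -
  define \<tau> where "\<tau> d = pi\<^sup>2 / 6 - 1 / (D / real d) - inv_square_sum (nat \<lfloor>D / real d\<rfloor>)" for d
  have "pi\<^sup>2 / 6 * (\<Sum>d=1..K. moebius_mu d / (real d)\<^sup>2) - 1
            - (\<Sum>d=1..K. moebius_mu d / real d) / D
      = (\<Sum>d=1..K. moebius_mu d * (\<tau> d / (real d)\<^sup>2))"
  proof -
    have "1 = (\<Sum>d=1..K. moebius_mu d / (real d)\<^sup>2 * inv_square_sum (nat \<lfloor>D / real d\<rfloor>))"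
      using sum_moebius_mu_inv_square_sum_floor[OF assms(1)] by (simp add: K_def)
    also have "\<dots> = (\<Sum>d=1..K. pi\<^sup>2 / 6 * (moebius_mu d / (real d)\<^sup>2)
                             - (moebius_mu d / real d) / D - moebius_mu d * (\<tau> d / (real d)\<^sup>2))"
      using assms by (intro sum.cong refl) (simp add: \<tau>_def field_simps power2_eq_square)
    finally show ?thesis
      by (simp add: sum_subtractf sum_distrib_left sum_divide_distrib)
  qed
  also have "\<bar>\<dots>\<bar> \<le> (2/3) / D\<^sup>2 * card {d \<in> {1..K}. squarefree d}"
  proof (rule abs_sum_moebius_mu_le)
    fix d assume d: "d \<in> {1..K}"
    then have "d \<le> nat \<lfloor>D\<rfloor>"
      by (simp add: K_def)
    then have "1 \<le> D / real d"
      using assms d by (simp add: le_divide_eq) linarith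
    then have "\<bar>\<tau> d\<bar> \<le> (2/3) / (D / real d)\<^sup>2"
      using basel_remainder_bound[of "D / real d"] by (simp add: \<tau>_def)
    then show "\<bar>\<tau> d / (real d)\<^sup>2\<bar> \<le> (2/3) / D\<^sup>2"
      using d by (simp add: field_simps power2_eq_square)
  qed
  finally show ?thesis .
qed

lemma squarefree_sum_error_le:
  fixes D M Q :: real
  assumes "D \<ge> 100" "\<bar>M\<bar> \<le> 1" "0 \<le> Q" "Q \<le> (3 * D + 3) / 4"
  shows "(12 / pi\<^sup>2 + zeta_half) * M + (8 / pi\<^sup>2 + 17/25) * (Q / D) \<le> 1.44"
proof -
  have "\<bar>12 / pi\<^sup>2 + zeta_half\<bar> \<le> 3/10"
    using twelve_div_pi_squared_bounds zeta_half_numeric_bounds unfolding abs_le_iff by auto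
  then have "\<bar>12 / pi\<^sup>2 + zeta_half\<bar> * \<bar>M\<bar> \<le> 3/10 * 1"
    using assms(2) by (intro mult_mono) auto
  then have "(12 / pi\<^sup>2 + zeta_half) * M \<le> 3/10"
    using abs_ge_self[of "(12 / pi\<^sup>2 + zeta_half) * M"] by (simp add: abs_mult)
  moreover have "(8 / pi\<^sup>2 + 17/25) * (Q / D) \<le> (2/3 * 1.22 + 17/25) * 0.7575"
  proof (rule mult_mono)
    show "8 / pi\<^sup>2 + 17/25 \<le> 2/3 * 1.22 + 17/25"
      using twelve_div_pi_squared_bounds(2) by (simp add: field_simps)
    show "Q / D \<le> 0.7575"
      using assms(1,4) by (simp add: divide_le_eq)
  qed (use assms in simp_all)
  ultimately have "(12 / pi\<^sup>2 + zeta_half) * M + (8 / pi\<^sup>2 + 17/25) * (Q / D)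
      \<le> 3/10 + (2/3 * 1.22 + 17/25) * 0.7575"
    by linarith
  also have "\<dots> \<le> 1.44"
    by simp
  finally show ?thesis .
qed

lemma sum_squarefree_inv_sqrt_le:
  fixes t :: real
  assumes "t \<ge> 10^4"
  shows "(\<Sum>k=1..nat \<lfloor>t\<rfloor>. (if squarefree k then 1 else 0) / sqrt (real k))
         \<le> 12 / pi\<^sup>2 * sqrt t + 0.17 * ln t"
proof -
  define D K where "D = sqrt t" and "K = nat \<lfloor>D\<rfloor>"
  define A M Q where "A = (\<Sum>d=1..K. moebius_mu d / (real d)\<^sup>2)"
    and "M = (\<Sum>d=1..K. moebius_mu d / real d)" and "Q = real (card {d \<in> {1..K}. squarefree d})"
  have "D \<ge> 100"
    using real_sqrt_le_mono[OF assms] by (simp add: D_def)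
  have "(\<Sum>k=1..nat \<lfloor>t\<rfloor>. (if squarefree k then 1 else 0) / sqrt (real k))
        \<le> 2 * D * A + zeta_half * M + (17/25) / D * Q"
    using sum_squarefree_inv_sqrt_approx[of t] assms by (simp add: D_def K_def A_def M_def Q_def abs_le_iff)
  also have "2 * D * A = 12 / pi\<^sup>2 * D * (pi\<^sup>2 / 6 * A)"
    by simp
  also have "\<dots> \<le> 12 / pi\<^sup>2 * D * (1 + M / D + (2/3) / D\<^sup>2 * Q)"
    using sum_moebius_mu_div_square_approx[of D] \<open>D \<ge> 100\<close>
    by (intro mult_left_mono) (simp_all add: K_def A_def M_def Q_def abs_le_iff)
  also have "\<dots> + zeta_half * M + (17/25) / D * Q
      = 12 / pi\<^sup>2 * D + ((12 / pi\<^sup>2 + zeta_half) * M + (8 / pi\<^sup>2 + 17/25) * (Q / D))"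
    using \<open>D \<ge> 100\<close> by (simp add: field_simps power2_eq_square)
  also have "\<dots> \<le> 12 / pi\<^sup>2 * D + 1.44"
  proof -
    have "K \<ge> 1"
      using \<open>D \<ge> 100\<close> by (simp add: K_def le_nat_floor)
    moreover have "Q \<le> (3 * D + 3) / 4"
      using card_squarefree_le[of K] \<open>D \<ge> 100\<close> by (simp add: Q_def K_def) linarith
    ultimately show ?thesis
      using squarefree_sum_error_le[OF \<open>D \<ge> 100\<close>] abs_sum_moebius_mu_div_le_1
      by (simp add: M_def Q_def)
  qed
  also have "1.44 \<le> 0.17 * ln t"
  proof -
    have "13 * ln (2 :: real) = ln (2 ^ 13)"
      using ln_realpow[of 2 13] by simp
    also have "\<dots> \<le> ln t"
      using assms by (subst ln_le_cancel_iff) auto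
    finally show ?thesis
      using ln2_ge_two_thirds by simp
  qed
  finally show ?thesis
    by (simp add: D_def)
qed

theorem mainTheorem12:
  fixes x y :: real
  assumes "x > 0" and "y > 0" and "x / y \<ge> 10^4"
  shows "(1 / sqrt x) * (\<Sum>k\<in>{1..nat \<lfloor>x / y\<rfloor>}. (if squarefree k then 1 else 0) / sqrt (real k))
         \<le> 12 / (pi^2 * sqrt y) + 0.17 * ln (x / y) / sqrt x"
proof -
  have "(1 / sqrt x) * (\<Sum>k\<in>{1..nat \<lfloor>x / y\<rfloor>}. (if squarefree k then 1 else 0) / sqrt (real k))
      \<le> (1 / sqrt x) * (12 / pi\<^sup>2 * sqrt (x / y) + 0.17 * ln (x / y))"
    using sum_squarefree_inv_sqrt_le[OF assms(3)] assms(1) by (intro mult_left_mono) auto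
  also have "\<dots> = 12 / (pi^2 * sqrt y) + 0.17 * ln (x / y) / sqrt x"
    using assms(1,2) by (simp add: real_sqrt_divide field_simps)
  finally show ?thesis .
qed

end
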